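(* For each natural number $n$, the restriction of the preorder $\leqslant_{\vec{|\square[n]|}}$ to the vertex set $\vec{|\mathrm{sk}_0(\square[n])|}$ equals the restriction of the preorder $\leqslant_{\vec{|\mathrm{sk}_1(\square[n])|}}$ to that same vertex set.
   Context: Streams: a circulation on a space $X$ assigns to each open $V\subset X$ a preorder $\leqslant_V$ such that for every collection $\mathcal{O}$ of open sets, $\leqslant_{\bigcup\mathcal{O}}$ is the preorder with smallest graph containing $\bigcup_{V\in\mathcal{O}}\mathrm{graph}(\leqslant_V)$; a stream is a space with a circulation, $\leqslant_X$ being the preorder on $X$ itself; stream maps are continuous maps with $f(x)\leqslant_V f(y)$ whenever $x\leqslant_{f^{-1}V}y$. The category of streams is cocomplete with colimits computed on underlying spaces (final circulation). $\square$ is the smallest subcategory of posets and monotone maps closed under cartesian products (unit $[0]=\{0\}$) containing $\delta_\pm:[0]\to[1]=\{0<1\}$; a precubical set is a functor $\square^{op}\to\mathbf{Set}$; $\square[n]=\square(-,[1]^n)$; for a precubical set $X$, $\mathrm{sk}_k(X)$ is the smallest sub-precubical set $A\subseteq X$ with $A_k=X_k$. $\vec\square[1]$ is $[0,1]$ with circulation $x\leqslant_V y$ iff $x\le y$ and $[x,y]\subset V$, $\vec\square[n]$ is its $n$-fold product in streams, and the stream realization of $X$ is the coend $\vec{|X|}=\int^{[1]^n}X_n\cdot\vec\square[n]$ in streams. Thus $\vec{|\square[n]|}=\vec\square[n]$ (underlying space $\mathbb{I}^n$), $\vec{|\mathrm{sk}_0(\square[n])|}$ is the set of vertices $\{0,1\}^n$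 and $\vec{|\mathrm{sk}_1(\square[n])|}$ is the union of the edges of the cube, as streams. *)

theory Defs
  imports "HOL-Analysis.Analysis"
begin

text \<open>Circulations (Krishnan): to each open V a preorder on V, satisfying the
cosheaf-like condition for every collection of open sets. The value on
non-open sets is normalised to the empty relation.\<close>
definition circulation :: "'a topology \<Rightarrow> ('a set \<Rightarrow> ('a \<times> 'a) set) \<Rightarrow> bool" where
  "circulation X C \<longleftrightarrow>
     (\<forall>V. \<not> openin X V \<longrightarrow> C V = {}) \<and>
     (\<forall>V. openin X V \<longrightarrow> preorder_on V (C V)) \<and>
     (\<forall>\<O>. (\<forall>V\<in>\<O>. openin X V) \<longrightarrow> C (\<Union>\<O>) = trancl (\<Union>V\<in>\<O>. C V))"

definition stream_map ::
  "'a topology \<Rightarrow> ('a set \<Rightarrow> ('a \<times> 'a) set) \<Rightarrow> 'b topology \<Rightarrow> ('b set \<Rightarrow> ('b \<times> 'b) set)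
   \<Rightarrow> ('a \<Rightarrow> 'b) \<Rightarrow> bool" where
  "stream_map X C Y D f \<longleftrightarrow> continuous_map X Y f \<and>
     (\<forall>V. openin Y V \<longrightarrow>
        (\<forall>x y. (x, y) \<in> C {z \<in> topspace X. f z \<in> V} \<longrightarrow> (f x, f y) \<in> D V))"

definition I1_top :: "real topology" where
  "I1_top = top_of_set {0..1}"

definition I1_circ :: "real set \<Rightarrow> (real \<times> real) set" where
  "I1_circ V = (if openin I1_top V then {(x, y). x \<le> y \<and> {x..y} \<subseteq> V} else {})"

text \<open>The n-cube, points are extensional functions on {..<n}.\<close>
definition cube_top :: "nat \<Rightarrow> (nat \<Rightarrow> real) topology" where
  "cube_top n = product_topology (\<lambda>_. I1_top) {..<n}"

text \<open>Circulation of the n-fold product stream: the initial circulation on the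
product space with respect to the projections, i.e. the greatest circulation
making all projections stream maps.\<close>
definition cube_circ :: "nat \<Rightarrow> (nat \<Rightarrow> real) set \<Rightarrow> ((nat \<Rightarrow> real) \<times> (nat \<Rightarrow> real)) set" where
  "cube_circ n = (GREATEST D. circulation (cube_top n) D \<and>
      (\<forall>i<n. stream_map (cube_top n) D I1_top I1_circ (\<lambda>x. x i)))"

text \<open>Vertices {0,1}^n (realization of the 0-skeleton).\<close>
definition vertices :: "nat \<Rightarrow> (nat \<Rightarrow> real) set" where
  "vertices n = PiE {..<n} (\<lambda>_. {0, 1})"

definition edge_map :: "nat \<Rightarrow> (nat \<Rightarrow> real) \<Rightarrow> real \<Rightarrow> (nat \<Rightarrow> real)" where
  "edge_map i v t = v(i := t)"

definition skel1_set :: "nat \<Rightarrow> (nat \<Rightarrow> real) set" where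
  "skel1_set n = vertices n \<union>
     (\<Union>i\<in>{..<n}. \<Union>v\<in>{v \<in> vertices n. v i = 0}. edge_map i v ` {0..1})"

definition skel1_top :: "nat \<Rightarrow> (nat \<Rightarrow> real) topology" where
  "skel1_top n = subtopology (cube_top n) (skel1_set n)"

text \<open>Circulation of the realization of the 1-skeleton: the final circulation on
the union of edges with respect to the edge maps, i.e. the least circulation
making all edge maps stream maps (vertex maps from the one-point stream are
stream maps for every circulation).\<close>
definition skel1_circ :: "nat \<Rightarrow> (nat \<Rightarrow> real) set \<Rightarrow> ((nat \<Rightarrow> real) \<times> (nat \<Rightarrow> real)) set" where
  "skel1_circ n = (LEAST E. circulation (skel1_top n) E \<and>
      (\<forall>i<n. \<forall>v\<in>vertices n. v i = 0 \<longrightarrow>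
          stream_map I1_top I1_circ (skel1_top n) E (edge_map i v)))"

end

theory Submission
  imports Defs
begin

(* The preorder of the directed n-cube and the preorder of its 1-skeleton agree
   on the vertices: both are the coordinatewise order.

   The cube
   carries the greatest circulation making all projections stream maps; we show
   it is the join (pointwise transitive closure of the union) of all such
   circulations. The 1-skeleton carries the least circulation making all edge
   maps stream maps; we construct, for any family of directed paths, the
   circulation generated by them and prove its universal properties, the cosheaf
   condition coming from a Lebesgue number argument on [0,1].

   Given these, the global preorder of the cube is the coordinatewise order: the
   projections are monotone, and for v <= w coordinatewise the circulation
   generated by the straight segment from v to w is admissible, hence below the
   cube's. On the 1-skeleton the projections are again monotone, and comparable
   vertices are joined by a chain of edges. *)

lemma topspace_I1 [simp]: "topspace I1_top = {0..1}"
  by (simp add: I1_top_def)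

lemma I1_circ_iff: "(s, t) \<in> I1_circ V \<longleftrightarrow> openin I1_top V \<and> s \<le> t \<and> {s..t} \<subseteq> V"
  by (auto simp: I1_circ_def)

lemma I1_circ_preorder:
  assumes "openin I1_top V" shows "preorder_on V (I1_circ V)"
  unfolding preorder_on_def
proof (intro conjI)
  show "I1_circ V \<subseteq> V \<times> V" by (auto simp: I1_circ_iff subset_iff)
  show "refl_on V (I1_circ V)" using assms by (auto simp: refl_on_def I1_circ_iff)
  show "trans (I1_circ V)"
  proof (rule transI)
    fix x y z assume "(x, y) \<in> I1_circ V" "(y, z) \<in> I1_circ V"
    moreover have "{x..z} \<subseteq> {x..y} \<union> {y..z}" by auto
    ultimately show "(x, z) \<in> I1_circ V" by (auto simp: I1_circ_iff)
  qed
qed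

lemma stream_map_I1_le:
  assumes "stream_map X C I1_top I1_circ g" and "(x, y) \<in> C (topspace X)"
  shows "g x \<le> g y"
proof -
  have "{z \<in> topspace X. g z \<in> topspace I1_top} = topspace X"
    using assms(1) by (auto simp: stream_map_def continuous_map_def)
  then have "(g x, g y) \<in> I1_circ (topspace I1_top)"
    using assms unfolding stream_map_def by (metis openin_topspace)
  then show ?thesis by (simp add: I1_circ_iff)
qed

(* Continuous monotone self-maps of [0,1] are stream maps of the directed interval:
   by the intermediate value theorem, the image of [s,t] covers [h s, h t]. *)
lemma mono_stream_map_I1:
  assumes cont: "continuous_on {0..1} h" and maps: "h ` {0..1} \<subseteq> {0..1}"
    and mono: "mono_on {0..1} h"
  shows "stream_map I1_top I1_circ I1_top I1_circ h"
  unfolding stream_map_def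
proof (intro conjI allI impI)
  show "continuous_map I1_top I1_top h"
    using cont maps unfolding I1_top_def by (auto simp: continuous_map_in_subtopology)
  fix V s t assume V: "openin I1_top V" and st: "(s, t) \<in> I1_circ {z \<in> topspace I1_top. h z \<in> V}"
  then have st: "s \<le> t" "{s..t} \<subseteq> {0..1}" "h ` {s..t} \<subseteq> V" by (auto simp: I1_circ_iff)
  have "{h s..h t} \<subseteq> V"
  proof
    fix c assume "c \<in> {h s..h t}"
    moreover have "continuous_on {s..t} h" using cont st(2) continuous_on_subset by blast
    ultimately obtain z where "s \<le> z" "z \<le> t" "h z = c" using IVT'[of h s c t] st(1) by auto
    then show "c \<in> V" using st(3) by auto
  qed
  moreover have "h s \<le> h t" using mono st by (auto intro: mono_onD)
  ultimately show "(h s, h t) \<in> I1_circ V" using V by (simp add: I1_circ_iff)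
qed

(* The cosheaf condition, applied to the pair {V, U}, makes every circulation
   monotone with respect to inclusion of open sets. *)
lemma circulation_mono:
  assumes C: "circulation X C" and "openin X V" "openin X U" "V \<subseteq> U"
  shows "C V \<subseteq> C U"
proof -
  have "\<forall>\<O>. (\<forall>W\<in>\<O>. openin X W) \<longrightarrow> C (\<Union>\<O>) = (\<Union>W\<in>\<O>. C W)\<^sup>+"
    using C unfolding circulation_def by (elim conjE)
  then have "C (\<Union>{V, U}) = (\<Union>W\<in>{V, U}. C W)\<^sup>+"
    using assms(2,3) by (metis insert_iff singletonD)
  moreover have "\<Union>{V, U} = U" using assms(4) by auto
  ultimately have "C U = (C V \<union> C U)\<^sup>+" by simp
  then show ?thesis by auto
qed

(* The discrete circulation relates each point of an open set only to itself.
   Every continuous map out of it is a stream map, so admissible circulations exist. *)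
definition discrete_circ :: "'a topology \<Rightarrow> 'a set \<Rightarrow> ('a \<times> 'a) set" where
  "discrete_circ X U = (if openin X U then Id_on U else {})"

lemma discrete_circulation: "circulation X (discrete_circ X)"
  unfolding circulation_def
proof (intro conjI allI impI)
  fix V assume "\<not> openin X V"
  then show "discrete_circ X V = {}" by (simp add: discrete_circ_def)
next
  fix V assume "openin X V"
  then show "preorder_on V (discrete_circ X V)"
    by (auto simp: discrete_circ_def preorder_on_def refl_on_def trans_Id_on)
next
  fix \<O> assume op: "\<forall>V\<in>\<O>. openin X V"
  then have "(\<Union>V\<in>\<O>. discrete_circ X V) = Id_on (\<Union>\<O>)"
    by (auto simp: discrete_circ_def)
  moreover have "openin X (\<Union>\<O>)" using op by auto
  ultimately show "discrete_circ X (\<Union>\<O>) = (\<Union>V\<in>\<O>. discrete_circ X V)\<^sup>+"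
    by (simp add: discrete_circ_def trancl_id trans_Id_on)
qed

lemma discrete_stream_map:
  assumes f: "continuous_map X Y f" and pre: "\<And>V. openin Y V \<Longrightarrow> preorder_on V (D V)"
  shows "stream_map X (discrete_circ X) Y D f"
  unfolding stream_map_def
proof (intro conjI allI impI)
  fix V x y assume V: "openin Y V" and "(x, y) \<in> discrete_circ X {z \<in> topspace X. f z \<in> V}"
  then have "y = x" "f x \<in> V" by (auto simp: discrete_circ_def split: if_splits)
  then show "(f x, f y) \<in> D V" using pre[OF V] by (auto simp: preorder_on_def refl_on_def)
qed (rule f)

lemma trancl_least: "A \<subseteq> B \<Longrightarrow> trans B \<Longrightarrow> A\<^sup>+ \<subseteq> B"
  by (metis trancl_id trancl_mono_subset)

definition join_circ :: "('a set \<Rightarrow> ('a \<times> 'a) set) set \<Rightarrow> 'a set \<Rightarrow> ('a \<times> 'a) set" where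
  "join_circ \<C> U = (\<Union>C\<in>\<C>. C U)\<^sup>+"

lemma join_circ_upper:
  assumes "C \<in> \<C>" shows "C \<le> join_circ \<C>"
proof (rule le_funI)
  fix U
  have "C U \<subseteq> (\<Union>C\<in>\<C>. C U)" using assms by blast
  also have "\<dots> \<subseteq> (\<Union>C\<in>\<C>. C U)\<^sup>+" by (rule trancl_incr)
  finally show "C U \<subseteq> join_circ \<C> U" by (simp add: join_circ_def)
qed

lemma join_circulation:
  assumes ne: "\<C> \<noteq> {}" and circ: "\<And>C. C \<in> \<C> \<Longrightarrow> circulation X C"
  shows "circulation X (join_circ \<C>)"
  unfolding circulation_def
proof (intro conjI allI impI)
  fix V assume "\<not> openin X V"
  then have "(\<Union>C\<in>\<C>. C V) = {}" using circ by (auto simp: circulation_def)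
  then show "join_circ \<C> V = {}" by (metis join_circ_def trancl_empty)
next
  fix V assume V: "openin X V"
  have "(\<Union>C\<in>\<C>. C V) \<subseteq> V \<times> V" using circ V by (force simp: circulation_def preorder_on_def)
  then have "join_circ \<C> V \<subseteq> V \<times> V" unfolding join_circ_def by (rule trancl_subset_Sigma)
  moreover obtain C where "C \<in> \<C>" using ne by blast
  then have "refl_on V (join_circ \<C> V)"
    using circ V unfolding join_circ_def circulation_def preorder_on_def refl_on_def by blast
  ultimately show "preorder_on V (join_circ \<C> V)"
    by (simp add: preorder_on_def join_circ_def)
next
  fix \<O> assume op: "\<forall>V\<in>\<O>. openin X V"
  have "C (\<Union>\<O>) \<subseteq> (\<Union>V\<in>\<O>. join_circ \<C> V)\<^sup>+" if "C \<in> \<C>" for C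
  proof -
    have "C (\<Union>\<O>) = (\<Union>V\<in>\<O>. C V)\<^sup>+" using circ[OF that] op by (simp add: circulation_def)
    also have "\<dots> \<subseteq> (\<Union>V\<in>\<O>. join_circ \<C> V)\<^sup>+"
      using that by (intro trancl_mono_subset) (auto simp: join_circ_def)
    finally show ?thesis .
  qed
  then have "join_circ \<C> (\<Union>\<O>) \<subseteq> (\<Union>V\<in>\<O>. join_circ \<C> V)\<^sup>+"
    unfolding join_circ_def[of \<C> "\<Union>\<O>"] by (intro trancl_least) auto
  moreover have "join_circ \<C> V \<subseteq> join_circ \<C> (\<Union>\<O>)" if "V \<in> \<O>" for V
  proof -
    have "C V \<subseteq> C (\<Union>\<O>)" if "C \<in> \<C>" for C
      using circulation_mono[OF circ[OF that]] op \<open>V \<in> \<O>\<close> by blast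
    then show ?thesis unfolding join_circ_def by (intro trancl_mono_subset) auto
  qed
  then have "(\<Union>V\<in>\<O>. join_circ \<C> V)\<^sup>+ \<subseteq> join_circ \<C> (\<Union>\<O>)"
    by (intro trancl_least) (auto simp: join_circ_def)
  ultimately show "join_circ \<C> (\<Union>\<O>) = (\<Union>V\<in>\<O>. join_circ \<C> V)\<^sup>+" by blast
qed

lemma join_stream_map:
  assumes ne: "\<C> \<noteq> {}" and maps: "\<And>C. C \<in> \<C> \<Longrightarrow> stream_map X C Y D f"
    and trans: "\<And>V. openin Y V \<Longrightarrow> trans (D V)"
  shows "stream_map X (join_circ \<C>) Y D f"
  unfolding stream_map_def
proof (intro conjI allI impI)
  show "continuous_map X Y f" using ne maps by (auto simp: stream_map_def)
  fix V x y assume V: "openin Y V" and xy: "(x, y) \<in> join_circ \<C> {z \<in> topspace X. f z \<in> V}"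
  have "(\<Union>C\<in>\<C>. C {z \<in> topspace X. f z \<in> V}) \<subseteq> {(x, y). (f x, f y) \<in> D V}"
    using maps V by (auto simp: stream_map_def)
  moreover have "trans {(x, y). (f x, f y) \<in> D V}"
    using trans[OF V] by (auto simp: trans_def)
  ultimately have "join_circ \<C> {z \<in> topspace X. f z \<in> V} \<subseteq> {(x, y). (f x, f y) \<in> D V}"
    unfolding join_circ_def by (rule trancl_least)
  then show "(f x, f y) \<in> D V" using xy by auto
qed

(* Lebesgue number argument: if [s,t] is covered by open sets, the passage from
   g s to g t splits into finitely many steps, each inside one member of the cover. *)
lemma interval_chain:
  fixes g :: "real \<Rightarrow> 'a"
  assumes st: "s \<le> t" and cover: "{s..t} \<subseteq> \<Union>\<C>" and open_cover: "\<And>B. B \<in> \<C> \<Longrightarrow> open B"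
    and step: "\<And>a b. s \<le> a \<Longrightarrow> a \<le> b \<Longrightarrow> b \<le> t \<Longrightarrow> \<exists>B\<in>\<C>. {a..b} \<subseteq> B \<Longrightarrow> (g a, g b) \<in> R"
  shows "(g s, g t) \<in> R\<^sup>*"
proof -
  have "\<C> \<noteq> {}" using st cover by auto
  then obtain \<delta> where \<delta>: "0 < \<delta>"
    and small: "\<And>T. T \<subseteq> {s..t} \<Longrightarrow> diameter T < \<delta> \<Longrightarrow> \<exists>B\<in>\<C>. T \<subseteq> B"
    using Lebesgue_number_lemma[of "{s..t}" \<C>] cover open_cover by auto
  have reach: "(g s, g b) \<in> R\<^sup>*" if "s \<le> b" "b \<le> t" "b - s \<le> real k * (\<delta>/2)" for k b
    using that
  proof (induction k arbitrary: b)
    case 0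
    then show ?case by auto
  next
    case (Suc k)
    define a where "a = max s (b - \<delta>/2)"
    have a: "s \<le> a" "a \<le> b" "a - s \<le> real k * (\<delta>/2)"
      using Suc.prems \<delta> by (auto simp: a_def algebra_simps max_def)
    have "\<exists>B\<in>\<C>. {a..b} \<subseteq> B"
      using a Suc.prems \<delta> by (intro small) (auto simp: a_def max_def)
    then have "(g a, g b) \<in> R" using step a Suc.prems by auto
    moreover have "(g s, g a) \<in> R\<^sup>*" using Suc.IH a Suc.prems by auto
    ultimately show ?case by auto
  qed
  obtain k where "(t - s) / (\<delta>/2) \<le> real k" using real_arch_simple by blast
  then have "t - s \<le> real k * (\<delta>/2)" using \<delta> by (simp add: field_simps)
  then show ?thesis using reach st by auto
qed

(* The final circulation generated by a family F of directed paths [0,1] -> X: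
   on an open U it is generated by the pairs (gamma s, gamma t) with s <= t and
   gamma [s,t] inside U, together with the identity of U. *)
definition path_steps :: "(real \<Rightarrow> 'a) set \<Rightarrow> 'a set \<Rightarrow> ('a \<times> 'a) set" where
  "path_steps F U =
     {(\<gamma> s, \<gamma> t) | \<gamma> s t. \<gamma> \<in> F \<and> (s, t) \<in> I1_circ {z \<in> topspace I1_top. \<gamma> z \<in> U}}"

definition path_circ :: "'a topology \<Rightarrow> (real \<Rightarrow> 'a) set \<Rightarrow> 'a set \<Rightarrow> ('a \<times> 'a) set" where
  "path_circ X F U = (if openin X U then (Id_on U \<union> path_steps F U)\<^sup>+ else {})"

lemma path_stepsE:
  assumes "p \<in> path_steps F U"
  obtains \<gamma> s t where "p = (\<gamma> s, \<gamma> t)" "\<gamma> \<in> F" "s \<le> t" "{s..t} \<subseteq> {0..1}" "\<gamma> ` {s..t} \<subseteq> U"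
proof -
  obtain \<gamma> s t where "p = (\<gamma> s, \<gamma> t)" "\<gamma> \<in> F" "s \<le> t"
      "{s..t} \<subseteq> {z \<in> topspace I1_top. \<gamma> z \<in> U}"
    using assms unfolding path_steps_def I1_circ_iff by blast
  then show thesis using that by (metis (no_types, lifting) image_subset_iff mem_Collect_eq
      subsetI subsetD topspace_I1)
qed

lemma path_stepsI:
  assumes "\<gamma> \<in> F" "continuous_map I1_top X \<gamma>" "openin X U"
    and "s \<le> t" "{s..t} \<subseteq> {0..1}" "\<gamma> ` {s..t} \<subseteq> U"
  shows "(\<gamma> s, \<gamma> t) \<in> path_steps F U"
proof -
  have "openin I1_top {z \<in> topspace I1_top. \<gamma> z \<in> U}"
    using openin_continuous_map_preimage[OF assms(2,3)] .
  then have "(s, t) \<in> I1_circ {z \<in> topspace I1_top. \<gamma> z \<in> U}"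
    using assms(4-6) by (auto simp: I1_circ_iff)
  then show ?thesis using assms(1) unfolding path_steps_def by blast
qed

lemma path_steps_subset_circ: "openin X U \<Longrightarrow> path_steps F U \<subseteq> path_circ X F U"
  by (auto simp: path_circ_def)

lemma path_circ_refl: "openin X U \<Longrightarrow> x \<in> U \<Longrightarrow> (x, x) \<in> path_circ X F U"
  by (auto simp: path_circ_def)

lemma path_circ_least_rel:
  assumes "trans R" "Id_on U \<subseteq> R" "path_steps F U \<subseteq> R"
  shows "path_circ X F U \<subseteq> R"
  using trancl_least[of "Id_on U \<union> path_steps F U" R] assms by (auto simp: path_circ_def)

lemma path_circ_mono:
  assumes cont: "\<And>\<gamma>. \<gamma> \<in> F \<Longrightarrow> continuous_map I1_top X \<gamma>"
    and "openin X U" "V \<subseteq> U"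
  shows "path_circ X F V \<subseteq> path_circ X F U"
proof (rule path_circ_least_rel)
  show "trans (path_circ X F U)" by (simp add: path_circ_def)
  show "Id_on V \<subseteq> path_circ X F U" using assms(2,3) by (auto simp: path_circ_refl)
  show "path_steps F V \<subseteq> path_circ X F U"
  proof
    fix p assume "p \<in> path_steps F V"
    then obtain \<gamma> s t where "p = (\<gamma> s, \<gamma> t)" "\<gamma> \<in> F" "s \<le> t" "{s..t} \<subseteq> {0..1}" "\<gamma> ` {s..t} \<subseteq> V"
      by (rule path_stepsE)
    then have "p \<in> path_steps F U"
      using path_stepsI[OF _ cont] assms(2,3) by (metis order_trans)
    then show "p \<in> path_circ X F U" using path_steps_subset_circ assms(2) by blast
  qed
qed

(* Locality: an elementary step inside a union of open sets is a chain of
   elementary steps inside the members, by the Lebesgue number argument. *)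
lemma path_steps_local:
  assumes cont: "\<And>\<gamma>. \<gamma> \<in> F \<Longrightarrow> continuous_map I1_top X \<gamma>" and op: "\<forall>V\<in>\<O>. openin X V"
  shows "path_steps F (\<Union>\<O>) \<subseteq> (\<Union>V\<in>\<O>. path_circ X F V)\<^sup>+"
proof
  define R where "R = (\<Union>V\<in>\<O>. path_circ X F V)"
  fix p assume "p \<in> path_steps F (\<Union>\<O>)"
  then obtain \<gamma> s t where p: "p = (\<gamma> s, \<gamma> t)" "\<gamma> \<in> F" "s \<le> t" "{s..t} \<subseteq> {0..1}"
      "\<gamma> ` {s..t} \<subseteq> \<Union>\<O>"
    by (rule path_stepsE)
  have preimage: "\<exists>B. open B \<and> {z \<in> {0..1}. \<gamma> z \<in> V} = {0..1} \<inter> B" if "V \<in> \<O>" for V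
  proof -
    have "openin I1_top {z \<in> topspace I1_top. \<gamma> z \<in> V}"
      using openin_continuous_map_preimage[OF cont[OF p(2)]] op that by blast
    then show ?thesis by (auto simp: I1_top_def openin_open)
  qed
  define \<C> where "\<C> = {B. open B \<and> (\<exists>V\<in>\<O>. {0..1} \<inter> B \<subseteq> {z \<in> {0..1}. \<gamma> z \<in> V})}"
  have "(\<gamma> s, \<gamma> t) \<in> R\<^sup>*"
  proof (rule interval_chain[where \<C> = \<C>])
    show "{s..t} \<subseteq> \<Union>\<C>"
    proof
      fix z assume z: "z \<in> {s..t}"
      then obtain V where V: "V \<in> \<O>" "\<gamma> z \<in> V" using p(5) by blast
      then obtain B where B: "open B" "{z \<in> {0..1}. \<gamma> z \<in> V} = {0..1} \<inter> B"
        using preimage by blast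
      then have "B \<in> \<C>" using V by (auto simp: \<C>_def)
      moreover have "z \<in> B" using B z p(4) V by blast
      ultimately show "z \<in> \<Union>\<C>" by blast
    qed
  next
    fix a b assume ab: "s \<le> a" "a \<le> b" "b \<le> t" "\<exists>B\<in>\<C>. {a..b} \<subseteq> B"
    then obtain B V where BV: "{a..b} \<subseteq> B" "V \<in> \<O>" "{0..1} \<inter> B \<subseteq> {z \<in> {0..1}. \<gamma> z \<in> V}"
      by (auto simp: \<C>_def)
    have ab01: "{a..b} \<subseteq> {0..1}" using ab p(4) by auto
    then have "\<gamma> ` {a..b} \<subseteq> V" using BV by blast
    then have "(\<gamma> a, \<gamma> b) \<in> path_steps F V"
      using path_stepsI[OF p(2) cont[OF p(2)]] op BV(2) ab(2) ab01 by blast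
    then show "(\<gamma> a, \<gamma> b) \<in> R"
      using path_steps_subset_circ[of X V F] op BV(2) by (auto simp: R_def)
  qed (use p(3) in \<open>auto simp: \<C>_def\<close>)
  moreover have "(\<gamma> s, \<gamma> s) \<in> R"
  proof -
    have "s \<in> {s..t}" using p(3) by simp
    then have "\<gamma> s \<in> \<Union>\<O>" using p(5) by blast
    then obtain V where V: "V \<in> \<O>" "\<gamma> s \<in> V" by blast
    then have "(\<gamma> s, \<gamma> s) \<in> path_circ X F V" using op by (simp add: path_circ_refl)
    then show ?thesis using V(1) unfolding R_def by blast
  qed
  ultimately show "p \<in> R\<^sup>+" using p(1) by (auto intro: rtrancl_into_trancl2)
qed

lemma path_circ_circulation:
  assumes cont: "\<And>\<gamma>. \<gamma> \<in> F \<Longrightarrow> continuous_map I1_top X \<gamma>"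
  shows "circulation X (path_circ X F)"
  unfolding circulation_def
proof (intro conjI allI impI)
  fix V assume "\<not> openin X V" then show "path_circ X F V = {}" by (simp add: path_circ_def)
next
  fix V assume V: "openin X V"
  have "path_steps F V \<subseteq> V \<times> V"
    by (auto elim!: path_stepsE)
  then have "path_circ X F V \<subseteq> V \<times> V"
    using V trancl_subset_Sigma[of "Id_on V \<union> path_steps F V" V] by (auto simp: path_circ_def)
  then show "preorder_on V (path_circ X F V)"
    using V by (auto simp: preorder_on_def refl_on_def path_circ_refl path_circ_def)
next
  fix \<O> assume op: "\<forall>V\<in>\<O>. openin X V"
  have union_open: "openin X (\<Union>\<O>)" using op by auto
  have "(\<Union>V\<in>\<O>. path_circ X F V)\<^sup>+ \<subseteq> path_circ X F (\<Union>\<O>)"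
  proof (rule trancl_least)
    show "(\<Union>V\<in>\<O>. path_circ X F V) \<subseteq> path_circ X F (\<Union>\<O>)"
      using path_circ_mono[of F X, OF cont union_open] by blast
  qed (simp add: path_circ_def)
  moreover have "path_circ X F (\<Union>\<O>) \<subseteq> (\<Union>V\<in>\<O>. path_circ X F V)\<^sup>+"
  proof (rule path_circ_least_rel)
    show "Id_on (\<Union>\<O>) \<subseteq> (\<Union>V\<in>\<O>. path_circ X F V)\<^sup>+"
      using op path_circ_refl by fastforce
  qed (use path_steps_local[OF cont op] in auto)
  ultimately show "path_circ X F (\<Union>\<O>) = (\<Union>V\<in>\<O>. path_circ X F V)\<^sup>+" by blast
qed

lemma path_circ_stream_map:
  assumes "\<gamma> \<in> F" "continuous_map I1_top X \<gamma>"
  shows "stream_map I1_top I1_circ X (path_circ X F) \<gamma>"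
  unfolding stream_map_def
proof (intro conjI allI impI)
  fix V x y assume V: "openin X V" and "(x, y) \<in> I1_circ {z \<in> topspace I1_top. \<gamma> z \<in> V}"
  then have "(\<gamma> x, \<gamma> y) \<in> path_steps F V" using assms(1) unfolding path_steps_def by blast
  then show "(\<gamma> x, \<gamma> y) \<in> path_circ X F V" using V path_steps_subset_circ by blast
qed (rule assms(2))

lemma path_circ_least:
  assumes D: "circulation X D" and maps: "\<And>\<gamma>. \<gamma> \<in> F \<Longrightarrow> stream_map I1_top I1_circ X D \<gamma>"
  shows "path_circ X F \<le> D"
proof (rule le_funI)
  fix U show "path_circ X F U \<subseteq> D U"
  proof (cases "openin X U")
    case True
    then have pre: "preorder_on U (D U)" using D by (simp add: circulation_def)
    show ?thesis
    proof (rule path_circ_least_rel)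
      show "trans (D U)" "Id_on U \<subseteq> D U" using pre by (auto simp: preorder_on_def refl_on_def)
      show "path_steps F U \<subseteq> D U"
        using maps True unfolding path_steps_def stream_map_def by blast
    qed
  qed (simp add: path_circ_def)
qed

lemma path_circ_map_out:
  assumes g: "continuous_map X Y g" and pre: "\<And>V. openin Y V \<Longrightarrow> preorder_on V (D V)"
    and comp: "\<And>\<gamma>. \<gamma> \<in> F \<Longrightarrow> stream_map I1_top I1_circ Y D (g \<circ> \<gamma>)"
  shows "stream_map X (path_circ X F) Y D g"
  unfolding stream_map_def
proof (intro conjI allI impI)
  fix V x y assume V: "openin Y V" and xy: "(x, y) \<in> path_circ X F {z \<in> topspace X. g z \<in> V}"
  have "path_circ X F {z \<in> topspace X. g z \<in> V} \<subseteq> {(x, y). (g x, g y) \<in> D V}"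
  proof (rule path_circ_least_rel)
    show "trans {(x, y). (g x, g y) \<in> D V}"
      using pre[OF V] by (auto simp: preorder_on_def trans_def)
    show "Id_on {z \<in> topspace X. g z \<in> V} \<subseteq> {(x, y). (g x, g y) \<in> D V}"
      using pre[OF V] by (auto simp: preorder_on_def refl_on_def)
    show "path_steps F {z \<in> topspace X. g z \<in> V} \<subseteq> {(x, y). (g x, g y) \<in> D V}"
    proof
      fix p assume "p \<in> path_steps F {z \<in> topspace X. g z \<in> V}"
      then obtain \<gamma> s t where p: "p = (\<gamma> s, \<gamma> t)" "\<gamma> \<in> F" "s \<le> t" "{s..t} \<subseteq> {0..1}"
          "\<gamma> ` {s..t} \<subseteq> {z \<in> topspace X. g z \<in> V}"
        by (rule path_stepsE)
      have "continuous_map I1_top Y (g \<circ> \<gamma>)" using comp[OF p(2)] by (simp add: stream_map_def)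
      then have "openin I1_top {z \<in> topspace I1_top. (g \<circ> \<gamma>) z \<in> V}"
        using V by (rule openin_continuous_map_preimage)
      moreover have "{s..t} \<subseteq> {z \<in> topspace I1_top. (g \<circ> \<gamma>) z \<in> V}" using p(4,5) by auto
      ultimately have "(s, t) \<in> I1_circ {z \<in> topspace I1_top. (g \<circ> \<gamma>) z \<in> V}"
        using p(3) by (simp add: I1_circ_iff)
      then show "p \<in> {(x, y). (g x, g y) \<in> D V}"
        using comp[OF p(2)] V p(1) unfolding stream_map_def by auto
    qed
  qed
  then show "(g x, g y) \<in> D V" using xy by auto
qed (rule g)

lemma path_circ_stream_map_I1:
  assumes g: "continuous_map X I1_top g"
    and comp: "\<And>\<gamma>. \<gamma> \<in> F \<Longrightarrow>
      continuous_on {0..1} (g \<circ> \<gamma>) \<and> (g \<circ> \<gamma>) ` {0..1} \<subseteq> {0..1} \<and> mono_on {0..1} (g \<circ> \<gamma>)"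
  shows "stream_map X (path_circ X F) I1_top I1_circ g"
  using g I1_circ_preorder comp by (intro path_circ_map_out mono_stream_map_I1) auto

lemma path_circ_endpoints:
  assumes "\<gamma> \<in> F" "continuous_map I1_top X \<gamma>"
  shows "(\<gamma> 0, \<gamma> 1) \<in> path_circ X F (topspace X)"
proof -
  have "\<gamma> ` {0..1} \<subseteq> topspace X"
    using continuous_map_image_subset_topspace[OF assms(2)] by simp
  then have "(\<gamma> 0, \<gamma> 1) \<in> path_steps F (topspace X)"
    using path_stepsI[OF assms] by simp
  then show ?thesis using path_steps_subset_circ by blast
qed

lemma topspace_cube: "topspace (cube_top n) = PiE {..<n} (\<lambda>_. {0..1})"
  by (simp add: cube_top_def)

lemma cube_projection_continuous: "i < n \<Longrightarrow> continuous_map (cube_top n) I1_top (\<lambda>x. x i)"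
  unfolding cube_top_def by (intro continuous_map_product_projection) auto

definition cube_admissible :: "nat \<Rightarrow> ((nat \<Rightarrow> real) set \<Rightarrow> ((nat \<Rightarrow> real) \<times> (nat \<Rightarrow> real)) set) \<Rightarrow> bool"
  where "cube_admissible n C \<longleftrightarrow> circulation (cube_top n) C \<and>
      (\<forall>i<n. stream_map (cube_top n) C I1_top I1_circ (\<lambda>x. x i))"

(* The greatest admissible circulation exists: it is the join of all of them. *)
lemma cube_circ_greatest:
  shows "cube_admissible n (cube_circ n)"
    and "cube_admissible n C \<Longrightarrow> C \<le> cube_circ n"
proof -
  let ?\<C> = "Collect (cube_admissible n)"
  have "cube_admissible n (discrete_circ (cube_top n))"
    using discrete_circulation discrete_stream_map[OF cube_projection_continuous I1_circ_preorder]
    by (auto simp: cube_admissible_def)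
  then have ne: "?\<C> \<noteq> {}" by blast
  have join: "cube_admissible n (join_circ ?\<C>)"
    unfolding cube_admissible_def[of n "join_circ ?\<C>"]
  proof (intro conjI allI impI)
    show "circulation (cube_top n) (join_circ ?\<C>)"
      using ne by (rule join_circulation) (simp add: cube_admissible_def)
    fix i assume "i < n"
    then show "stream_map (cube_top n) (join_circ ?\<C>) I1_top I1_circ (\<lambda>x. x i)"
      using ne I1_circ_preorder
      by (intro join_stream_map) (auto simp: cube_admissible_def preorder_on_def)
  qed
  have "cube_circ n = Greatest (cube_admissible n)"
    unfolding cube_circ_def cube_admissible_def by simp
  also have "\<dots> = join_circ ?\<C>"
  proof (rule Greatest_equality)
    fix C assume "cube_admissible n C"
    then show "C \<le> join_circ ?\<C>" by (simp add: join_circ_upper)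
  qed (rule join)
  finally have eq: "cube_circ n = join_circ ?\<C>" .
  show "cube_admissible n (cube_circ n)" unfolding eq by (rule join)
  show "cube_admissible n C \<Longrightarrow> C \<le> cube_circ n" unfolding eq
    by (simp add: join_circ_upper)
qed

definition cube_segment :: "nat \<Rightarrow> (nat \<Rightarrow> real) \<Rightarrow> (nat \<Rightarrow> real) \<Rightarrow> real \<Rightarrow> (nat \<Rightarrow> real)" where
  "cube_segment n v w t = (\<lambda>i. if i < n then v i + t * (w i - v i) else undefined)"

lemma affine_unit_interval:
  fixes a b t :: real
  assumes "0 \<le> a" "a \<le> b" "b \<le> 1" "0 \<le> t" "t \<le> 1"
  shows "0 \<le> a + t * (b - a) \<and> a + t * (b - a) \<le> 1"
proof -
  have "0 \<le> t * (b - a)" using assms by simp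
  moreover have "t * (b - a) \<le> 1 * (b - a)" using assms by (intro mult_right_mono) auto
  ultimately show ?thesis using assms by auto
qed

lemma cube_segment_component:
  assumes "v \<in> topspace (cube_top n)" "w \<in> topspace (cube_top n)" "v i \<le> w i" "i < n"
  shows "continuous_on {0..1} (\<lambda>t. cube_segment n v w t i)"
    and "(\<lambda>t. cube_segment n v w t i) ` {0..1} \<subseteq> {0..1}"
    and "mono_on {0..1} (\<lambda>t. cube_segment n v w t i)"
proof -
  have vw: "0 \<le> v i" "w i \<le> 1" using assms by (auto simp: topspace_cube PiE_iff)
  have eq: "(\<lambda>t. cube_segment n v w t i) = (\<lambda>t. v i + t * (w i - v i))"
    using assms(4) by (simp add: cube_segment_def)
  show "continuous_on {0..1} (\<lambda>t. cube_segment n v w t i)"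
    unfolding eq by (intro continuous_intros)
  show "(\<lambda>t. cube_segment n v w t i) ` {0..1} \<subseteq> {0..1}"
    unfolding eq using affine_unit_interval[of "v i" "w i"] vw assms(3) by auto
  show "mono_on {0..1} (\<lambda>t. cube_segment n v w t i)"
    unfolding eq using assms(3) by (intro mono_onI) (simp add: mult_right_mono)
qed

lemma cube_segment_continuous:
  assumes "v \<in> topspace (cube_top n)" "w \<in> topspace (cube_top n)" "\<And>i. i < n \<Longrightarrow> v i \<le> w i"
  shows "continuous_map I1_top (cube_top n) (cube_segment n v w)"
  unfolding cube_top_def continuous_map_componentwise
proof (intro conjI ballI)
  show "cube_segment n v w ` topspace I1_top \<subseteq> extensional {..<n}"
    by (auto simp: cube_segment_def extensional_def)
  fix i assume "i \<in> {..<n}"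
  then show "continuous_map I1_top I1_top (\<lambda>t. cube_segment n v w t i)"
    using cube_segment_component[OF assms(1,2)] assms(3) unfolding I1_top_def
    by (auto simp: continuous_map_in_subtopology)
qed

lemma cube_segment_endpoints:
  assumes "v \<in> topspace (cube_top n)" "w \<in> topspace (cube_top n)"
  shows "cube_segment n v w 0 = v" "cube_segment n v w 1 = w"
  using assms by (auto simp: cube_segment_def topspace_cube PiE_def extensional_def)

(* On the whole cube the global preorder is the coordinatewise order: projections
   give one inclusion, and the circulation generated by the segment from v to w is
   admissible, hence below cube_circ, which gives the other. *)
lemma cube_order:
  assumes v: "v \<in> topspace (cube_top n)" and w: "w \<in> topspace (cube_top n)"
  shows "(v, w) \<in> cube_circ n (topspace (cube_top n)) \<longleftrightarrow> (\<forall>i<n. v i \<le> w i)"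
proof
  assume vw: "(v, w) \<in> cube_circ n (topspace (cube_top n))"
  show "\<forall>i<n. v i \<le> w i"
  proof (intro allI impI)
    fix i assume "i < n"
    then have "stream_map (cube_top n) (cube_circ n) I1_top I1_circ (\<lambda>x. x i)"
      using cube_circ_greatest(1) by (simp add: cube_admissible_def)
    then show "v i \<le> w i" using vw by (rule stream_map_I1_le)
  qed
next
  assume le: "\<forall>i<n. v i \<le> w i"
  let ?F = "{cube_segment n v w}"
  have cont: "continuous_map I1_top (cube_top n) (cube_segment n v w)"
    using cube_segment_continuous[OF v w] le by blast
  have "cube_admissible n (path_circ (cube_top n) ?F)"
    unfolding cube_admissible_def
  proof (intro conjI allI impI)
    show "circulation (cube_top n) (path_circ (cube_top n) ?F)"
      using cont by (intro path_circ_circulation) auto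
    fix i assume "i < n"
    then show "stream_map (cube_top n) (path_circ (cube_top n) ?F) I1_top I1_circ (\<lambda>x. x i)"
      using cube_segment_component[OF v w] le
      by (intro path_circ_stream_map_I1 cube_projection_continuous) (auto simp: comp_def)
  qed
  then have below: "path_circ (cube_top n) ?F \<le> cube_circ n" by (rule cube_circ_greatest(2))
  have "(cube_segment n v w 0, cube_segment n v w 1) \<in> path_circ (cube_top n) ?F (topspace (cube_top n))"
    by (rule path_circ_endpoints[OF _ cont]) simp
  then have "(v, w) \<in> path_circ (cube_top n) ?F (topspace (cube_top n))"
    by (simp add: cube_segment_endpoints[OF v w])
  then show "(v, w) \<in> cube_circ n (topspace (cube_top n))" using le_funD[OF below] by blast
qed

lemma vertex_coord: "v \<in> vertices n \<Longrightarrow> j < n \<Longrightarrow> v j = 0 \<or> v j = 1"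
  unfolding vertices_def by (auto simp: PiE_iff)

lemma vertex_update: "v \<in> vertices n \<Longrightarrow> i < n \<Longrightarrow> y \<in> {0, 1} \<Longrightarrow> v(i := y) \<in> vertices n"
  unfolding vertices_def using PiE_fun_upd[of y "\<lambda>_. {0, 1::real}" i v "{..<n}"]
  by (simp add: insert_absorb)

lemma vertices_subset_cube: "vertices n \<subseteq> topspace (cube_top n)"
  unfolding vertices_def topspace_cube by (intro PiE_mono) auto

definition cube_edges :: "nat \<Rightarrow> (real \<Rightarrow> (nat \<Rightarrow> real)) set" where
  "cube_edges n = {edge_map i v | i v. i < n \<and> v \<in> vertices n \<and> v i = 0}"

lemma edge_in_cube:
  assumes "v \<in> vertices n" "i < n" "t \<in> {0..1}"
  shows "edge_map i v t \<in> topspace (cube_top n)"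
  using assms vertices_subset_cube PiE_fun_upd[of t "\<lambda>_. {0..1::real}" i v "{..<n}"]
  by (auto simp: edge_map_def topspace_cube insert_absorb)

lemma topspace_skel1: "topspace (skel1_top n) = skel1_set n"
proof -
  have "skel1_set n \<subseteq> topspace (cube_top n)"
    unfolding skel1_set_def using vertices_subset_cube edge_in_cube by blast
  then show ?thesis by (auto simp: skel1_top_def)
qed

(* Each coordinate of an edge is constant or the identity. *)
lemma edge_component:
  assumes v: "v \<in> vertices n" and "j < n"
  shows "continuous_on {0..1} (\<lambda>t. edge_map i v t j)"
    and "(\<lambda>t. edge_map i v t j) ` {0..1} \<subseteq> {0..1}"
    and "mono_on {0..1} (\<lambda>t. edge_map i v t j)"
proof -
  have eq: "(\<lambda>t. edge_map i v t j) = (if j = i then (\<lambda>t. t) else (\<lambda>t. v j))"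
    by (auto simp: edge_map_def)
  have "v j \<in> {0..1}" using vertex_coord[OF v \<open>j < n\<close>] by auto
  then show "continuous_on {0..1} (\<lambda>t. edge_map i v t j)"
    and "(\<lambda>t. edge_map i v t j) ` {0..1} \<subseteq> {0..1}"
    and "mono_on {0..1} (\<lambda>t. edge_map i v t j)"
    unfolding eq by (auto intro: mono_onI)
qed

lemma edge_continuous:
  assumes v: "v \<in> vertices n" and i: "i < n" and vi: "v i = 0"
  shows "continuous_map I1_top (skel1_top n) (edge_map i v)"
  unfolding skel1_top_def continuous_map_in_subtopology
proof
  show "continuous_map I1_top (cube_top n) (edge_map i v)"
    unfolding cube_top_def continuous_map_componentwise
  proof (intro conjI ballI)
    show "edge_map i v ` topspace I1_top \<subseteq> extensional {..<n}"
      using edge_in_cube[OF v i] by (auto simp: topspace_cube PiE_def)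
    fix j assume "j \<in> {..<n}"
    then show "continuous_map I1_top I1_top (\<lambda>t. edge_map i v t j)"
      using edge_component[OF v, of j i] unfolding I1_top_def
      by (auto simp: continuous_map_in_subtopology image_subset_iff)
  qed
  show "edge_map i v \<in> topspace I1_top \<rightarrow> skel1_set n"
    using v i vi unfolding skel1_set_def by auto
qed

lemma skel1_circ_eq: "skel1_circ n = path_circ (skel1_top n) (cube_edges n)"
proof -
  have cont: "\<And>\<gamma>. \<gamma> \<in> cube_edges n \<Longrightarrow> continuous_map I1_top (skel1_top n) \<gamma>"
    unfolding cube_edges_def using edge_continuous by blast
  show ?thesis unfolding skel1_circ_def
  proof (rule Least_equality)
    show "circulation (skel1_top n) (path_circ (skel1_top n) (cube_edges n)) \<and>
      (\<forall>i<n. \<forall>v\<in>vertices n. v i = 0 \<longrightarrow>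
        stream_map I1_top I1_circ (skel1_top n) (path_circ (skel1_top n) (cube_edges n)) (edge_map i v))"
    proof (intro conjI allI impI ballI)
      show "circulation (skel1_top n) (path_circ (skel1_top n) (cube_edges n))"
        using cont by (rule path_circ_circulation)
      fix i v assume "i < n" "v \<in> vertices n" "v i = 0"
      then show "stream_map I1_top I1_circ (skel1_top n) (path_circ (skel1_top n) (cube_edges n)) (edge_map i v)"
        by (intro path_circ_stream_map edge_continuous) (auto simp: cube_edges_def)
    qed
  next
    fix D assume "circulation (skel1_top n) D \<and>
      (\<forall>i<n. \<forall>v\<in>vertices n. v i = 0 \<longrightarrow> stream_map I1_top I1_circ (skel1_top n) D (edge_map i v))"
    then show "path_circ (skel1_top n) (cube_edges n) \<le> D"
      by (intro path_circ_least) (auto simp: cube_edges_def)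
  qed
qed

lemma skel1_projection_continuous: "i < n \<Longrightarrow> continuous_map (skel1_top n) I1_top (\<lambda>x. x i)"
  unfolding skel1_top_def by (intro continuous_map_from_subtopology cube_projection_continuous)

(* Coordinatewise comparable vertices are joined by a chain of edges, raising
   one coordinate from 0 to 1 at a time. *)
lemma skel1_vertex_chain:
  assumes "v \<in> vertices n" "w \<in> vertices n" "\<forall>i<n. v i \<le> w i"
  shows "(v, w) \<in> path_circ (skel1_top n) (cube_edges n) (topspace (skel1_top n))"
proof -
  let ?R = "path_circ (skel1_top n) (cube_edges n) (topspace (skel1_top n))"
  let ?diff = "\<lambda>u. {j. j < n \<and> u j \<noteq> w j}"
  have trans: "trans ?R" by (simp add: path_circ_def)
  define k where "k = card (?diff v)"
  from k_def assms show ?thesis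
  proof (induction k arbitrary: v)
    case 0
    then have "?diff v = {}" by simp
    then have "v = w" using "0.prems"(2,3) unfolding vertices_def by (intro PiE_ext) auto
    moreover have "v \<in> topspace (skel1_top n)"
      using "0.prems"(2) by (simp add: topspace_skel1 skel1_set_def)
    ultimately show ?case by (simp add: path_circ_refl)
  next
    case (Suc k)
    then have "?diff v \<noteq> {}" by (metis card.empty nat.distinct(1))
    then obtain i where i: "i < n" "v i \<noteq> w i" by blast
    have vi: "v i = 0" and wi: "w i = 1"
      using vertex_coord[OF Suc.prems(2) i(1)] vertex_coord[OF Suc.prems(3) i(1)] Suc.prems(4) i
      by auto
    define u where "u = v(i := 1)"
    have u: "u \<in> vertices n" using vertex_update[OF Suc.prems(2) i(1)] by (simp add: u_def)
    have "(edge_map i v 0, edge_map i v 1) \<in> ?R"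
    proof (rule path_circ_endpoints)
      show "edge_map i v \<in> cube_edges n" using Suc.prems(2) i(1) vi by (auto simp: cube_edges_def)
    qed (rule edge_continuous[OF Suc.prems(2) i(1) vi])
    moreover have "edge_map i v 0 = v" "edge_map i v 1 = u"
      using vi by (auto simp: edge_map_def u_def)
    ultimately have vu: "(v, u) \<in> ?R" by simp
    have "?diff u = ?diff v - {i}" using wi by (auto simp: u_def)
    then have "k = card (?diff u)" using Suc.prems(1) i by simp
    moreover have "\<forall>j<n. u j \<le> w j" using Suc.prems(4) wi by (simp add: u_def)
    ultimately have uw: "(u, w) \<in> ?R" using Suc.IH u Suc.prems(3) by blast
    show ?case using trans vu uw by (rule transD)
  qed
qed

lemma skel1_order:
  assumes v: "v \<in> vertices n" and w: "w \<in> vertices n"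
  shows "(v, w) \<in> skel1_circ n (topspace (skel1_top n)) \<longleftrightarrow> (\<forall>i<n. v i \<le> w i)"
proof
  assume vw: "(v, w) \<in> skel1_circ n (topspace (skel1_top n))"
  show "\<forall>i<n. v i \<le> w i"
  proof (intro allI impI)
    fix i assume i: "i < n"
    have "stream_map (skel1_top n) (skel1_circ n) I1_top I1_circ (\<lambda>x. x i)"
      unfolding skel1_circ_eq
    proof (rule path_circ_stream_map_I1[OF skel1_projection_continuous[OF i]])
      fix \<gamma> assume "\<gamma> \<in> cube_edges n"
      then obtain j u where "\<gamma> = edge_map j u" "u \<in> vertices n" by (auto simp: cube_edges_def)
      then show "continuous_on {0..1} ((\<lambda>x. x i) \<circ> \<gamma>) \<and> ((\<lambda>x. x i) \<circ> \<gamma>) ` {0..1} \<subseteq> {0..1}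
          \<and> mono_on {0..1} ((\<lambda>x. x i) \<circ> \<gamma>)"
        using edge_component[of u n i j] i by (simp add: comp_def)
    qed
    then show "v i \<le> w i" using vw by (rule stream_map_I1_le)
  qed
qed (use skel1_vertex_chain[OF v w] in \<open>simp add: skel1_circ_eq\<close>)

theorem mainTheorem8:
  fixes n :: nat
  shows "cube_circ n (topspace (cube_top n)) \<inter> (vertices n \<times> vertices n) =
         skel1_circ n (topspace (skel1_top n)) \<inter> (vertices n \<times> vertices n)"
proof -
  let ?V = "vertices n \<times> vertices n"
  let ?le = "{(v, w). \<forall>i<n. v i \<le> (w i :: real)}"
  have "cube_circ n (topspace (cube_top n)) \<inter> ?V = ?le \<inter> ?V"
    using cube_order vertices_subset_cube by blast
  moreover have "skel1_circ n (topspace (skel1_top n)) \<inter> ?V = ?le \<inter> ?V"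
    using skel1_order by blast
  ultimately show ?thesis by simp
qed

end
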